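(* Let $n\ge 0$ and let $R$ be a rook placement in the double staircase $2\delta_n$. Then the word $d(R)$ is a Dyck path of length $2n+2$, i.e. every prefix of $d(R)$ contains at least as many steps $\nearrow$ as steps $\searrow$, and $d(R)$ contains $n+1$ steps of each kind.
   Context: The double staircase $2\delta_n$ is the Young diagram (French convention: rows drawn bottom to top, left-justified) with row lengths $2n,2n-2,\dots,2$ from bottom to top; its columns are numbered $1,\dots,2n$ from left to right. A rook placement of size $n$ is a set of dots placed in cells of $2\delta_n$ such that each row contains exactly one dot and each column contains at most one dot. For such $R$, $d(R)$ is the word $w_1\cdots w_{2n+2}$ over $\{\nearrow,\searrow\}$ defined by: $w_1=\nearrow$, $w_{2n+2}=\searrow$, and for $2\le i\le 2n+1$, $w_i=\nearrow$ if column $i-1$ of $R$ contains a dot and $w_i=\searrow$ otherwise. A Dyck path of length $2m$ is a lattice path from $(0,0)$ to $(2m,0)$ with steps $\nearrow=(1,1)$ and $\searrow=(1,-1)$ never going below the $x$-axis (identified with the word of its steps). *)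

theory Defs
  imports Main
begin

(* Cells are pairs (row, column), rows numbered 1..n from bottom to top,
   columns 1..2n from left to right (French convention).
   Row i (1 <= i <= n) has length 2n - 2(i-1). *)
definition double_staircase :: "nat \<Rightarrow> (nat \<times> nat) set" where
  "double_staircase n = {(i, c). 1 \<le> i \<and> i \<le> n \<and> 1 \<le> c \<and> c \<le> 2 * n + 2 - 2 * i}"

definition rook_placement :: "nat \<Rightarrow> (nat \<times> nat) set \<Rightarrow> bool" where
  "rook_placement n R \<longleftrightarrow>
     R \<subseteq> double_staircase n \<and>
     (\<forall>i\<in>{1..n}. \<exists>!c. (i, c) \<in> R) \<and>
     (\<forall>c\<in>{1..2*n}. \<forall>i j. (i, c) \<in> R \<and> (j, c) \<in> R \<longrightarrow> i = j)"

(* Steps: True = up step (1,1), False = down step (1,-1). *)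
type_synonym step = bool

definition dword :: "nat \<Rightarrow> (nat \<times> nat) set \<Rightarrow> step list" where
  "dword n R = [True] @ map (\<lambda>c. \<exists>i. (i, c) \<in> R) [1..<2*n+1] @ [False]"

definition num_up :: "step list \<Rightarrow> nat" where
  "num_up w = length (filter (\<lambda>s. s) w)"

definition num_down :: "step list \<Rightarrow> nat" where
  "num_down w = length (filter (\<lambda>s. \<not> s) w)"

definition dyck_path :: "nat \<Rightarrow> step list \<Rightarrow> bool" where
  "dyck_path m w \<longleftrightarrow> length w = 2 * m \<and>
     (\<forall>k \<le> length w. num_down (take k w) \<le> num_up (take k w)) \<and>
     num_up w = num_down w"

end

theory Submission
  imports Defs
begin

text \<open>The up steps of \<open>d(R)\<close> after the first are the occupied columns, and there are \<open>n\<close>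
  of them. A dot in a column \<open>c > m\<close> lies in a row \<open>i\<close> with \<open>2i \<le> 2n+1-m\<close>, so at most
  \<open>(2n+1-m) div 2\<close> occupied columns lie to the right of column \<open>m\<close>; hence at least
  \<open>(m-1)/2\<close> of the first \<open>m\<close> columns are occupied, which is exactly what keeps the
  prefix of length \<open>m+1\<close> (which starts with an up step) from going below the axis.\<close>

lemma rook_placement_graph:
  assumes "rook_placement n R"
  obtains f where "R = (\<lambda>i. (i, f i)) ` {1..n}" and "inj_on f {1..n}"
    and "\<And>i. i \<in> {1..n} \<Longrightarrow> 1 \<le> f i \<and> f i \<le> 2 * n + 2 - 2 * i"
proof
  have sub: "R \<subseteq> double_staircase n"
    and row: "\<And>i. i \<in> {1..n} \<Longrightarrow> \<exists>!c. (i, c) \<in> R"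
    and col: "\<And>c i j. c \<in> {1..2*n} \<Longrightarrow> (i, c) \<in> R \<Longrightarrow> (j, c) \<in> R \<Longrightarrow> i = j"
    using assms unfolding rook_placement_def by blast+
  define f where "f i = (THE c. (i, c) \<in> R)" for i
  have in_R: "(i, f i) \<in> R" if "i \<in> {1..n}" for i
    unfolding f_def using theI'[OF row[OF that]] .
  have in_cells: "1 \<le> i \<and> i \<le> n \<and> 1 \<le> c \<and> c \<le> 2 * n + 2 - 2 * i" if "(i, c) \<in> R" for i c
    using sub that unfolding double_staircase_def by blast
  have f_unique: "c = f i" if "(i, c) \<in> R" for i c
    using in_cells[OF that] the1_equality[OF row that] unfolding f_def by simp
  show "R = (\<lambda>i. (i, f i)) ` {1..n}"
    using in_R f_unique in_cells by force
  show "inj_on f {1..n}"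
  proof (rule inj_onI)
    fix i j assume i: "i \<in> {1..n}" and j: "j \<in> {1..n}" and "f i = f j"
    then have "(i, f i) \<in> R" "(j, f i) \<in> R" using in_R by metis+
    moreover have "f i \<in> {1..2*n}" using in_cells[OF \<open>(i, f i) \<in> R\<close>] by auto
    ultimately show "i = j" using col by blast
  qed
  show "1 \<le> f i \<and> f i \<le> 2 * n + 2 - 2 * i" if "i \<in> {1..n}" for i
    using in_cells[OF in_R[OF that]] by blast
qed

lemma
  assumes "rook_placement n R"
  shows card_rook_columns: "card (snd ` R) = n"
    and rook_columns_subset: "snd ` R \<subseteq> {1..2*n}"
    and card_rook_columns_greaterThan: "card (snd ` R \<inter> {m<..}) \<le> (2 * n + 1 - m) div 2"
proof -
  obtain f where R: "R = (\<lambda>i. (i, f i)) ` {1..n}" and inj: "inj_on f {1..n}"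
    and bounds: "\<And>i. i \<in> {1..n} \<Longrightarrow> 1 \<le> f i \<and> f i \<le> 2 * n + 2 - 2 * i"
    using rook_placement_graph[OF assms] by blast
  have columns: "snd ` R = f ` {1..n}"
    unfolding R by (simp add: image_image)
  show "card (snd ` R) = n"
    using columns inj by (simp add: card_image)
  show "snd ` R \<subseteq> {1..2*n}"
    unfolding columns using bounds by (force intro: image_subsetI)
  have "snd ` R \<inter> {m<..} \<subseteq> f ` {1..(2 * n + 1 - m) div 2}"
  proof
    fix c assume "c \<in> snd ` R \<inter> {m<..}"
    then obtain i where i: "i \<in> {1..n}" "c = f i" "m < f i" using columns by auto
    then have "2 * i \<le> 2 * n + 1 - m" using bounds[OF i(1)] by linarith
    then show "c \<in> f ` {1..(2 * n + 1 - m) div 2}" using i by auto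
  qed
  then have "card (snd ` R \<inter> {m<..}) \<le> card (f ` {1..(2 * n + 1 - m) div 2})"
    by (intro card_mono) auto
  also have "\<dots> \<le> (2 * n + 1 - m) div 2"
    using card_image_le[of "{1..(2 * n + 1 - m) div 2}" f] by simp
  finally show "card (snd ` R \<inter> {m<..}) \<le> (2 * n + 1 - m) div 2" .
qed

lemma card_rook_columns_atMost:
  assumes "rook_placement n R" and "m \<le> 2 * n"
  shows "m \<le> 2 * card (snd ` R \<inter> {1..m}) + 1"
proof -
  have "snd ` R = (snd ` R \<inter> {1..m}) \<union> (snd ` R \<inter> {m<..})"
    using rook_columns_subset[OF assms(1)] by auto
  then have "n \<le> card (snd ` R \<inter> {1..m}) + card (snd ` R \<inter> {m<..})"
    using card_rook_columns[OF assms(1)] card_Un_le by metis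
  then show ?thesis
    using card_rook_columns_greaterThan[OF assms(1), of m] assms(2) by linarith
qed

lemma num_up_append [simp]: "num_up (xs @ ys) = num_up xs + num_up ys"
  and num_down_append [simp]: "num_down (xs @ ys) = num_down xs + num_down ys"
  and num_up_Cons [simp]: "num_up (x # xs) = (if x then 1 else 0) + num_up xs"
  and num_down_Cons [simp]: "num_down (x # xs) = (if x then 0 else 1) + num_down xs"
  and num_up_Nil [simp]: "num_up [] = 0"
  and num_down_Nil [simp]: "num_down [] = 0"
  by (simp_all add: num_up_def num_down_def)

lemma num_up_plus_num_down: "num_up xs + num_down xs = length xs"
  unfolding num_up_def num_down_def by (rule sum_length_filter_compl)

lemma num_up_map_mem_upt: "num_up (map (\<lambda>c. c \<in> A) [a..<b]) = card (A \<inter> {a..<b})"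
proof -
  have "num_up (map (\<lambda>c. c \<in> A) [a..<b]) = length (filter (\<lambda>c. c \<in> A) [a..<b])"
    by (simp add: num_up_def filter_map comp_def)
  also have "\<dots> = card (set (filter (\<lambda>c. c \<in> A) [a..<b]))"
    by (simp only: distinct_card[OF distinct_filter[OF distinct_upt]])
  also have "set (filter (\<lambda>c. c \<in> A) [a..<b]) = A \<inter> {a..<b}"
    by auto
  finally show ?thesis .
qed

lemma dword_eq: "dword n R = True # map (\<lambda>c. c \<in> snd ` R) [1..<2*n+1] @ [False]"
proof -
  have "(\<exists>i. (i, c) \<in> R) \<longleftrightarrow> c \<in> snd ` R" for c
    by force
  then show ?thesis
    unfolding dword_def by simp
qed

lemma take_Suc_dword:
  assumes "m \<le> 2 * n"
  shows "take (Suc m) (dword n R) = True # map (\<lambda>c. c \<in> snd ` R) [1..<m+1]"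
  using assms by (simp add: dword_eq take_map del: upt_Suc)

lemma
  assumes "rook_placement n R"
  shows num_up_dword: "num_up (dword n R) = n + 1"
    and num_down_dword: "num_down (dword n R) = n + 1"
proof -
  have "snd ` R \<inter> {1..<2*n+1} = snd ` R"
    using rook_columns_subset[OF assms] by auto
  then have up: "num_up (map (\<lambda>c. c \<in> snd ` R) [1..<2*n+1]) = n"
    using card_rook_columns[OF assms] by (simp only: num_up_map_mem_upt)
  then show "num_up (dword n R) = n + 1"
    by (simp add: dword_eq del: upt_Suc)
  have "num_down (map (\<lambda>c. c \<in> snd ` R) [1..<2*n+1]) = n"
    using num_up_plus_num_down[of "map (\<lambda>c. c \<in> snd ` R) [1..<2*n+1]"] up
    by (simp del: upt_Suc)
  then show "num_down (dword n R) = n + 1"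
    by (simp add: dword_eq del: upt_Suc)
qed

lemma num_down_take_dword_le:
  assumes "rook_placement n R" and "k \<le> length (dword n R)"
  shows "num_down (take k (dword n R)) \<le> num_up (take k (dword n R))"
proof -
  have "k \<le> 2 * n + 2" using assms(2) by (simp add: dword_eq del: upt_Suc)
  then consider "k = 0" | m where "k = Suc m" "m \<le> 2 * n" | "k = 2 * n + 2"
    by (cases k) (auto simp: le_Suc_eq)
  then show ?thesis
  proof cases
    case 2
    let ?prefix = "map (\<lambda>c. c \<in> snd ` R) [1..<m+1]"
    have "snd ` R \<inter> {1..<m+1} = snd ` R \<inter> {1..m}" by auto
    then have "num_up ?prefix = card (snd ` R \<inter> {1..m})"
      by (simp only: num_up_map_mem_upt)
    moreover have "num_up ?prefix + num_down ?prefix = m"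
      using num_up_plus_num_down[of ?prefix] by simp
    ultimately show ?thesis
      using 2 take_Suc_dword card_rook_columns_atMost[OF assms(1) \<open>m \<le> 2 * n\<close>] by simp
  next
    case 3
    then show ?thesis using num_up_dword[OF assms(1)] num_down_dword[OF assms(1)] by (simp add: dword_eq del: upt_Suc)
  qed simp
qed

theorem mainTheorem1:
  fixes n :: nat and R :: "(nat \<times> nat) set"
  assumes "rook_placement n R"
  shows "dyck_path (n + 1) (dword n R) \<and>
         (\<forall>k \<le> length (dword n R). num_down (take k (dword n R)) \<le> num_up (take k (dword n R))) \<and>
         num_up (dword n R) = n + 1 \<and> num_down (dword n R) = n + 1"
proof -
  have prefixes: "\<forall>k \<le> length (dword n R). num_down (take k (dword n R)) \<le> num_up (take k (dword n R))"
    using num_down_take_dword_le[OF assms] by blast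
  have "length (dword n R) = 2 * (n + 1)"
    by (simp add: dword_eq del: upt_Suc)
  then show ?thesis
    using prefixes num_up_dword[OF assms] num_down_dword[OF assms] unfolding dyck_path_def by simp
qed

end
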